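(* Let $G=\langle S_k\mid K\rangle$ be a finitely generated semigroup as described in the context with $K$ primitive, $\mathcal{A}$ a finite alphabet, and $X_{\mathbf{A}}$ a hom Markov tree shift on $G$ with $\mathbf{A}=(A,A,\dots,A)$. Let $\mathbf{G}=(\mathbf{V},\mathbf{E})$ be the graph representation of $X_{\mathbf{A}}$. Then (i) $\mathbf{G}$ is strongly connected if and only if $A$ is irreducible; (ii) $\mathbf{G}$ is strongly connected and contains a pivot if and only if $A$ is primitive.
   Context: Let $K$ be a $k\times k$ $\{0,1\}$-matrix indexed by $S_k=\{s_1,\dots,s_k\}$ and $G=\langle S_k\mid K\rangle$ the semigroup generated by $S_k$ with relations $s_is_j=1_G$ iff $K(s_i,s_j)=0$. Every $g\in G$ has a unique minimal representation $g=g_1\cdots g_n$ ($g_l\in S_k$, $K(g_l,g_{l+1})=1$), $|g|=n$. For a $k$-tuple $\mathbf{A}=(A_1,\dots,A_k)$ of $\{0,1\}$-matrices indexed by $\mathcal{A}$, $X_{\mathbf{A}}=\{t\in\mathcal{A}^G: A_i(t_g,t_{gs_i})=1 \text{ for all } g,i \text{ with } |gs_i|=|g|+1\}$; it is a hom Markov tree shift if all $A_i$ equal a single matrix $A$. The graph representation of $X_{\mathbf{A}}$ is the directed graph with vertex set $\mathbf{V}=\mathcal{A}\times S_k$ and edge set $\mathbf{E}=\{((a,s_i),(b,s_j)): K(s_i,s_j)=1,\ A_j(a,b)=1\}$. $\mathbf{G}$ is strongly connected if for all $(a,s_i),(b,s_j)\in\mathbf{V}$ there is a walk (of some positive length) from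 $(a,s_i)$ to $(b,s_j)$. A vertex $(a,s_i)$ is a pivot if there exist $s_j\in S_k$ and $N\in\mathbb{N}$ such that for every $b\in\mathcal{A}$ there is a walk of length exactly $N$ from $(a,s_i)$ to $(b,s_j)$. A nonnegative square matrix is irreducible if for each pair of indices $(i,j)$ some power has positive $(i,j)$ entry, and primitive if some power has all entries positive. *)

theory Defs
  imports Main
begin

definition mat_mult :: "('i::finite \<Rightarrow> 'i \<Rightarrow> nat) \<Rightarrow> ('i \<Rightarrow> 'i \<Rightarrow> nat) \<Rightarrow> 'i \<Rightarrow> 'i \<Rightarrow> nat" where
  "mat_mult M N = (\<lambda>i j. \<Sum>l\<in>UNIV. M i l * N l j)"

fun mat_pow :: "('i::finite \<Rightarrow> 'i \<Rightarrow> nat) \<Rightarrow> nat \<Rightarrow> 'i \<Rightarrow> 'i \<Rightarrow> nat" where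
  "mat_pow M 0 = (\<lambda>i j. if i = j then 1 else 0)"
| "mat_pow M (Suc n) = mat_mult (mat_pow M n) M"

definition nat_of_01 :: "('i \<Rightarrow> 'i \<Rightarrow> bool) \<Rightarrow> 'i \<Rightarrow> 'i \<Rightarrow> nat" where
  "nat_of_01 M = (\<lambda>i j. of_bool (M i j))"

definition irreducible_mat :: "('i::finite \<Rightarrow> 'i \<Rightarrow> nat) \<Rightarrow> bool" where
  "irreducible_mat M \<longleftrightarrow> (\<forall>i j. \<exists>n>0. mat_pow M n i j > 0)"

definition primitive_mat :: "('i::finite \<Rightarrow> 'i \<Rightarrow> nat) \<Rightarrow> bool" where
  "primitive_mat M \<longleftrightarrow> (\<exists>n>0. \<forall>i j. mat_pow M n i j > 0)"

text \<open>Graph representation of the Markov tree shift X_A (A = (A_1,...,A_k)) on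
  the semigroup <S_k | K>: vertices \<A> \<times> S_k, edges ((a,s_i),(b,s_j)) with
  K(s_i,s_j)=1 and A_j(a,b)=1.\<close>
definition graph_edges ::
  "('s \<Rightarrow> 's \<Rightarrow> bool) \<Rightarrow> ('s \<Rightarrow> 'a \<Rightarrow> 'a \<Rightarrow> bool) \<Rightarrow> (('a \<times> 's) \<times> ('a \<times> 's)) set" where
  "graph_edges K As = {((a, si), (b, sj)). K si sj \<and> As sj a b}"

definition strongly_connected :: "('v \<times> 'v) set \<Rightarrow> bool" where
  "strongly_connected E \<longleftrightarrow> (\<forall>v w. \<exists>n>0. (v, w) \<in> E ^^ n)"

definition is_pivot :: "(('a \<times> 's) \<times> ('a \<times> 's)) set \<Rightarrow> 'a \<times> 's \<Rightarrow> bool" where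
  "is_pivot E v \<longleftrightarrow> (\<exists>sj N. \<forall>b. (v, (b, sj)) \<in> E ^^ N)"

end

theory Submission
  imports Defs
begin

text \<open>Since all the A_j coincide, the graph representation is the tensor product of the relation
  of A with the relation of K: a walk of length n in it is a pair of walks of length n, one in
  each factor. As K is primitive, any sufficiently long length can be realised in the K-factor,
  and walks in the A-factor can be made arbitrarily long by inserting cycles; so strong
  connectivity of the graph is that of A. A pivot gives a row of some power of A that is
  entirely positive; composing with walks into its vertex from everywhere and padding all
  lengths to a common one turns this row into a full power of A.\<close>

definition rel_tensor :: "('a \<times> 'a) set \<Rightarrow> ('s \<times> 's) set \<Rightarrow> (('a \<times> 's) \<times> ('a \<times> 's)) set" where
  "rel_tensor R S = {((a, s), (b, t)). (a, b) \<in> R \<and> (s, t) \<in> S}"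

definition primitive_rel :: "('a \<times> 'a) set \<Rightarrow> bool" where
  "primitive_rel R \<longleftrightarrow> (\<exists>n>0. \<forall>x y. (x, y) \<in> R ^^ n)"

lemma mat_pow_nat_of_01_pos_iff:
  fixes M :: "'i::finite \<Rightarrow> 'i \<Rightarrow> bool"
  shows "0 < mat_pow (nat_of_01 M) n i j \<longleftrightarrow> (i, j) \<in> {(x, y). M x y} ^^ n"
proof (induction n arbitrary: j)
  case 0
  then show ?case by auto
next
  case (Suc n)
  have "0 < mat_pow (nat_of_01 M) (Suc n) i j \<longleftrightarrow>
        (\<exists>l. mat_pow (nat_of_01 M) n i l * nat_of_01 M l j \<noteq> 0)"
    unfolding zero_less_iff_neq_zero by (simp add: mat_mult_def del: mult_eq_0_iff)
  also have "\<dots> \<longleftrightarrow> (\<exists>l. 0 < mat_pow (nat_of_01 M) n i l \<and> M l j)"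
    by (simp add: nat_of_01_def)
  also have "\<dots> \<longleftrightarrow> (i, j) \<in> {(x, y). M x y} ^^ Suc n"
    using Suc by auto
  finally show ?case .
qed

lemma irreducible_mat_nat_of_01_iff:
  "irreducible_mat (nat_of_01 M) \<longleftrightarrow> strongly_connected {(x, y). M x y}"
  unfolding irreducible_mat_def strongly_connected_def mat_pow_nat_of_01_pos_iff ..

lemma primitive_mat_nat_of_01_iff:
  "primitive_mat (nat_of_01 M) \<longleftrightarrow> primitive_rel {(x, y). M x y}"
  unfolding primitive_mat_def primitive_rel_def mat_pow_nat_of_01_pos_iff ..

lemma graph_edges_const: "graph_edges K (\<lambda>_. A) = rel_tensor {(x, y). A x y} {(x, y). K x y}"
  by (auto simp: graph_edges_def rel_tensor_def)

lemma relpow_rel_tensor_iff: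
  "((a, s), (b, t)) \<in> rel_tensor R S ^^ n \<longleftrightarrow> (a, b) \<in> R ^^ n \<and> (s, t) \<in> S ^^ n"
proof (induction n arbitrary: b t)
  case 0
  then show ?case by auto
next
  case (Suc n)
  have "((a, s), (b, t)) \<in> rel_tensor R S ^^ Suc n \<longleftrightarrow>
        (\<exists>c u. ((a, s), (c, u)) \<in> rel_tensor R S ^^ n \<and> (c, b) \<in> R \<and> (u, t) \<in> S)"
    by (auto simp: rel_tensor_def)
  also have "\<dots> \<longleftrightarrow> (a, b) \<in> R ^^ Suc n \<and> (s, t) \<in> S ^^ Suc n"
    using Suc.IH by auto
  finally show ?case .
qed

lemma strongly_connected_has_predecessor:
  assumes "strongly_connected R"
  shows "\<exists>x. (x, y) \<in> R"
proof -
  obtain n where "0 < n" "(y, y) \<in> R ^^ n"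
    using assms unfolding strongly_connected_def by blast
  then show ?thesis
    by (metis gr0_implies_Suc relpow_Suc_E)
qed

lemma primitive_rel_imp_strongly_connected: "primitive_rel R \<Longrightarrow> strongly_connected R"
  unfolding primitive_rel_def strongly_connected_def by blast

lemma relpow_full_row_mono:
  fixes R :: "('a \<times> 'a) set"
  assumes pred: "\<And>y. \<exists>x. (x, y) \<in> R"
    and row: "\<And>y. (x, y) \<in> R ^^ n"
    and "n \<le> m"
  shows "(x, y) \<in> R ^^ m"
  using \<open>n \<le> m\<close>
proof (induction m arbitrary: y rule: dec_induct)
  case base
  then show ?case using row .
next
  case (step k)
  obtain z where "(z, y) \<in> R" using pred by blast
  with step.IH show ?case by (rule relpow_Suc_I)
qed

lemma primitive_rel_eventually_full:
  assumes "primitive_rel R"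
  obtains N where "\<And>m x y. N \<le> m \<Longrightarrow> (x, y) \<in> R ^^ m"
proof -
  obtain N where full: "\<And>x y. (x, y) \<in> R ^^ N"
    using assms unfolding primitive_rel_def by blast
  have "\<exists>x. (x, y) \<in> R" for y
    using assms by (intro strongly_connected_has_predecessor primitive_rel_imp_strongly_connected)
  then show thesis
    using relpow_full_row_mono full that by metis
qed

lemma strongly_connected_relpow_unbounded:
  assumes "strongly_connected R"
  shows "\<exists>n\<ge>N. (x, y) \<in> R ^^ n"
proof (induction N)
  case 0
  then show ?case using assms unfolding strongly_connected_def by blast
next
  case (Suc N)
  then obtain n where "N \<le> n" "(x, y) \<in> R ^^ n" by blast
  moreover obtain p where "0 < p" "(y, y) \<in> R ^^ p"
    using assms unfolding strongly_connected_def by blast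
  ultimately have "Suc N \<le> n + p" "(x, y) \<in> R ^^ (n + p)"
    by (auto intro: relpow_trans)
  then show ?case by blast
qed

lemma strongly_connected_rel_tensor_iff:
  assumes "primitive_rel S"
  shows "strongly_connected (rel_tensor R S) \<longleftrightarrow> strongly_connected R"
proof
  assume "strongly_connected (rel_tensor R S)"
  then show "strongly_connected R"
    unfolding strongly_connected_def by (meson relpow_rel_tensor_iff)
next
  assume R: "strongly_connected R"
  obtain N where S: "\<And>m s t. N \<le> m \<Longrightarrow> (s, t) \<in> S ^^ m"
    using primitive_rel_eventually_full[OF assms] by blast
  have "\<exists>n>0. ((a, s), (b, t)) \<in> rel_tensor R S ^^ n" for a s b t
  proof -
    obtain n where "Suc N \<le> n" and R_walk: "(a, b) \<in> R ^^ n"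
      using strongly_connected_relpow_unbounded[OF R] by blast
    then have "0 < n" "(s, t) \<in> S ^^ n"
      using S[of n] by simp_all
    with R_walk show ?thesis
      by (auto simp: relpow_rel_tensor_iff)
  qed
  then show "strongly_connected (rel_tensor R S)"
    unfolding strongly_connected_def by auto
qed

lemma primitive_rel_iff_full_row:
  fixes R :: "('a::finite \<times> 'a) set"
  shows "primitive_rel R \<longleftrightarrow> strongly_connected R \<and> (\<exists>x n. \<forall>y. (x, y) \<in> R ^^ n)"
proof
  assume "primitive_rel R"
  then show "strongly_connected R \<and> (\<exists>x n. \<forall>y. (x, y) \<in> R ^^ n)"
    using primitive_rel_imp_strongly_connected unfolding primitive_rel_def by blast
next
  assume "strongly_connected R \<and> (\<exists>x n. \<forall>y. (x, y) \<in> R ^^ n)"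
  then obtain x n where R: "strongly_connected R" and row: "\<And>y. (x, y) \<in> R ^^ n" by blast
  have "\<forall>z. \<exists>p>0. (z, x) \<in> R ^^ p"
    using R unfolding strongly_connected_def by blast
  then obtain len where len: "\<And>z. 0 < len z" "\<And>z. (z, x) \<in> R ^^ len z"
    by metis
  define P where "P = Max (range len)"
  have len_le: "len z \<le> P" for z
    unfolding P_def by simp
  have "(z, y) \<in> R ^^ (P + n)" for z y
  proof (rule relpow_full_row_mono)
    show "\<exists>u. (u, v) \<in> R" for v
      using R by (rule strongly_connected_has_predecessor)
    show "(z, v) \<in> R ^^ (len z + n)" for v
      using len(2) row by (rule relpow_trans)
    show "len z + n \<le> P + n"
      using len_le by simp
  qed
  moreover have "0 < P + n"
    using len(1)[of x] len_le[of x] by linarith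
  ultimately show "primitive_rel R"
    unfolding primitive_rel_def by blast
qed

lemma is_pivot_rel_tensor_imp_full_row:
  "is_pivot (rel_tensor R S) v \<Longrightarrow> \<exists>x n. \<forall>y. (x, y) \<in> R ^^ n"
  unfolding is_pivot_def by (metis prod.collapse relpow_rel_tensor_iff)

lemma primitive_rel_tensor_is_pivot:
  assumes "primitive_rel R" "primitive_rel S"
  shows "is_pivot (rel_tensor R S) v"
proof -
  obtain NR where R: "\<And>m x y. NR \<le> m \<Longrightarrow> (x, y) \<in> R ^^ m"
    using primitive_rel_eventually_full[OF assms(1)] by blast
  obtain NS where S: "\<And>m s t. NS \<le> m \<Longrightarrow> (s, t) \<in> S ^^ m"
    using primitive_rel_eventually_full[OF assms(2)] by blast
  have "(v, (b, t)) \<in> rel_tensor R S ^^ (NR + NS)" for b t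
    using R[of "NR + NS"] S[of "NR + NS"] relpow_rel_tensor_iff[of "fst v" "snd v"] by simp
  then show ?thesis
    unfolding is_pivot_def by blast
qed

theorem proposition5p3:
  fixes K :: "'s::finite \<Rightarrow> 's \<Rightarrow> bool"
    and A :: "'a::finite \<Rightarrow> 'a \<Rightarrow> bool"
  assumes "primitive_mat (nat_of_01 K)"
  shows "(strongly_connected (graph_edges K (\<lambda>_. A)) \<longleftrightarrow> irreducible_mat (nat_of_01 A))
       \<and> ((strongly_connected (graph_edges K (\<lambda>_. A)) \<and> (\<exists>v. is_pivot (graph_edges K (\<lambda>_. A)) v))
            \<longleftrightarrow> primitive_mat (nat_of_01 A))"
proof -
  let ?RA = "{(x, y). A x y}" and ?RK = "{(x, y). K x y}"
  have K: "primitive_rel ?RK"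
    using assms by (simp add: primitive_mat_nat_of_01_iff)
  have irreducible: "strongly_connected (graph_edges K (\<lambda>_. A)) \<longleftrightarrow> strongly_connected ?RA"
    unfolding graph_edges_const using K by (rule strongly_connected_rel_tensor_iff)
  have pivot: "(\<exists>v. is_pivot (graph_edges K (\<lambda>_. A)) v) \<longleftrightarrow> (\<exists>x n. \<forall>y. (x, y) \<in> ?RA ^^ n)"
    if "strongly_connected ?RA"
    unfolding graph_edges_const
    using is_pivot_rel_tensor_imp_full_row primitive_rel_tensor_is_pivot[OF _ K]
      primitive_rel_iff_full_row[of ?RA] that by blast
  show ?thesis
    using irreducible pivot primitive_rel_iff_full_row[of ?RA]
    by (auto simp: irreducible_mat_nat_of_01_iff primitive_mat_nat_of_01_iff)
qed

end
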